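(* Let $\Omega A$ and $\Omega B$ be differential graded algebras over $A$ and $B$. Let $E$ be a $(B,A)$-bimodule together with a $k$-linear map $\nabla^0:E\to\Omega^1B\otimes_BE$ satisfying $\nabla^0(be)=db\otimes_Be+b\nabla^0(e)$ for all $b\in B$, $e\in E$, and a $(B,A)$-bimodule map $\sigma:E\otimes_A\Omega^1A\to\Omega^1B\otimes_BE$, such that $\nabla^0(ea)=\nabla^0(e)a+\sigma(e\otimes_A da)$ for all $e\in E$, $a\in A$. For $e\in E$ let $\sigma_e:\Omega^1A\to\Omega^1B\otimes_BE$, $\omega\mapsto\sigma(e\otimes_A\omega)$. Let $M$ be a right $A$-module and $\nabla_0:\mathrm{Hom}_A(\Omega^1A,M)\to M$ a hom-connection. Regard $\mathrm{Hom}_A(E,M)$ as a right $B$-module by $(gb)(e)=g(be)$, and identify $\mathrm{Hom}_B(\Omega^1B,\mathrm{Hom}_A(E,M))\cong\mathrm{Hom}_A(\Omega^1B\otimes_BE,M)$ via $f\mapsto(\omega\otimes_Be\mapsto f(\omega)(e))$. Then the formula $$\nabla_0^E(f)(e):=\nabla_0(f\circ\sigma_e)-f(\nabla^0(e)),\qquad f\in \mathrm{Hom}_A(\Omega^1B\otimes_BE,M),\ e\in E,$$ defines a map $\nabla^E_0:\mathrm{Hom}_B(\Omega^1B,\mathrm{Hom}_A(E,M))\to\mathrm{Hom}_A(E,M)$ (i.e. each $\nabla_0^E(f)$ is right $A$-linear), and $(\mathrm{Hom}_A(E,M),\nabla^E_0)$ is a hom-connection with respect to $\Omega B$.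
   Context: All algebras are associative and unital over a field $k$. A differential graded algebra $\Omega A=\bigoplus_{n\ge0}\Omega^nA$ over $A=\Omega^0A$ has a degree-one differential $d$ with $d^2=0$ satisfying the graded Leibniz rule; similarly for $\Omega B$. For a right $A$-module $M$, $\mathrm{Hom}_A(-,-)$ denotes right $A$-linear maps, and $\mathrm{Hom}_A(\Omega^1A,M)$ is a right $A$-module via $(fa)(\omega)=f(a\omega)$. A (right) hom-connection on $M$ with respect to $\Omega A$ is a $k$-linear map $\nabla_0:\mathrm{Hom}_A(\Omega^1A,M)\to M$ with $\nabla_0(fa)=\nabla_0(f)a+f(da)$ for all $f$ and $a\in A$ (analogously with respect to $\Omega B$ for right $B$-modules). *)

theory Defs
  imports Main "HOL-Library.Function_Algebras"
begin

text \<open>A differential graded algebra over the field k, presented as a unital ring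
  Om (the total algebra) together with a grading G (G n = Omega^n), a differential d
  and the structure map iota : k -> Om (a ring map into the centre of degree 0).
  The base algebra is A = G 0.\<close>

definition dga :: "('k::field \<Rightarrow> 'r::ring_1) \<Rightarrow> (nat \<Rightarrow> 'r set) \<Rightarrow> ('r \<Rightarrow> 'r) \<Rightarrow> bool" where
  "dga \<iota> G d \<longleftrightarrow>
     (\<forall>n. 0 \<in> G n \<and> (\<forall>x\<in>G n. \<forall>y\<in>G n. x + y \<in> G n) \<and> (\<forall>x\<in>G n. - x \<in> G n))
   \<and> (\<forall>m n. \<forall>x\<in>G m. \<forall>y\<in>G n. x * y \<in> G (m + n))
   \<and> 1 \<in> G 0
   \<and> (\<forall>x. \<exists>N c. (\<forall>n. c n \<in> G n) \<and> x = (\<Sum>n<N. c n))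
   \<and> (\<forall>N c. (\<forall>n. c n \<in> G n) \<and> (\<Sum>n<N. c n) = 0 \<longrightarrow> (\<forall>n<N. c n = 0))
   \<and> (\<forall>c c'. \<iota> (c + c') = \<iota> c + \<iota> c' \<and> \<iota> (c * c') = \<iota> c * \<iota> c')
   \<and> \<iota> 1 = 1
   \<and> (\<forall>c. \<iota> c \<in> G 0 \<and> (\<forall>x. \<iota> c * x = x * \<iota> c))
   \<and> (\<forall>n. \<forall>x\<in>G n. d x \<in> G (Suc n))
   \<and> (\<forall>x y. d (x + y) = d x + d y)
   \<and> (\<forall>c x. d (\<iota> c * x) = \<iota> c * d x)
   \<and> (\<forall>x. d (d x) = 0)
   \<and> (\<forall>n. \<forall>x\<in>G n. \<forall>y. d (x * y) = d x * y + (-1) ^ n * x * d y)"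

definition right_module :: "'r::ring_1 set \<Rightarrow> 'x::ab_group_add set \<Rightarrow> ('x \<Rightarrow> 'r \<Rightarrow> 'x) \<Rightarrow> bool" where
  "right_module R0 X act \<longleftrightarrow>
     0 \<in> X \<and> (\<forall>x\<in>X. \<forall>y\<in>X. x + y \<in> X) \<and> (\<forall>x\<in>X. - x \<in> X)
   \<and> (\<forall>x\<in>X. \<forall>r\<in>R0. act x r \<in> X)
   \<and> (\<forall>x\<in>X. \<forall>y\<in>X. \<forall>r\<in>R0. act (x + y) r = act x r + act y r)
   \<and> (\<forall>x\<in>X. \<forall>r\<in>R0. \<forall>s\<in>R0. act x (r + s) = act x r + act x s)
   \<and> (\<forall>x\<in>X. \<forall>r\<in>R0. \<forall>s\<in>R0. act x (r * s) = act (act x r) s)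
   \<and> (\<forall>x\<in>X. act x 1 = x)"

definition left_module :: "'r::ring_1 set \<Rightarrow> 'x::ab_group_add set \<Rightarrow> ('r \<Rightarrow> 'x \<Rightarrow> 'x) \<Rightarrow> bool" where
  "left_module R0 X act \<longleftrightarrow>
     0 \<in> X \<and> (\<forall>x\<in>X. \<forall>y\<in>X. x + y \<in> X) \<and> (\<forall>x\<in>X. - x \<in> X)
   \<and> (\<forall>x\<in>X. \<forall>r\<in>R0. act r x \<in> X)
   \<and> (\<forall>x\<in>X. \<forall>y\<in>X. \<forall>r\<in>R0. act r (x + y) = act r x + act r y)
   \<and> (\<forall>x\<in>X. \<forall>r\<in>R0. \<forall>s\<in>R0. act (r + s) x = act r x + act s x)
   \<and> (\<forall>x\<in>X. \<forall>r\<in>R0. \<forall>s\<in>R0. act (r * s) x = act r (act s x))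
   \<and> (\<forall>x\<in>X. act 1 x = x)"

definition bimodule :: "'b::ring_1 set \<Rightarrow> 'a::ring_1 set \<Rightarrow> ('k \<Rightarrow> 'b) \<Rightarrow> ('k \<Rightarrow> 'a)
    \<Rightarrow> 'x::ab_group_add set \<Rightarrow> ('b \<Rightarrow> 'x \<Rightarrow> 'x) \<Rightarrow> ('x \<Rightarrow> 'a \<Rightarrow> 'x) \<Rightarrow> bool" where
  "bimodule B0 A0 \<iota>B \<iota>A X l r \<longleftrightarrow>
     left_module B0 X l \<and> right_module A0 X r
   \<and> (\<forall>b\<in>B0. \<forall>a\<in>A0. \<forall>x\<in>X. r (l b x) a = l b (r x a))
   \<and> (\<forall>c. \<forall>x\<in>X. l (\<iota>B c) x = r x (\<iota>A c))"

text \<open>T together with tens : X \<times> Y \<rightarrow> T is a tensor product X \<otimes>_R Y of the right R-module X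
  and the left R-module Y: tens is biadditive and R-balanced, its image generates T, and
  every biadditive balanced map into the abelian group 'z factors through an additive map
  on T (universal property, tested against target type 'z).\<close>

definition is_tensor :: "'r::ring_1 set \<Rightarrow> ('x::ab_group_add \<Rightarrow> 'r \<Rightarrow> 'x) \<Rightarrow> 'x set
    \<Rightarrow> ('r \<Rightarrow> 'y::ab_group_add \<Rightarrow> 'y) \<Rightarrow> 'y set \<Rightarrow> ('x \<Rightarrow> 'y \<Rightarrow> 't::ab_group_add)
    \<Rightarrow> 'z::ab_group_add itself \<Rightarrow> bool" where
  "is_tensor R0 mX X mY Y tens (z::'z itself) \<longleftrightarrow>
     (\<forall>x\<in>X. \<forall>x'\<in>X. \<forall>y\<in>Y. tens (x + x') y = tens x y + tens x' y)
   \<and> (\<forall>x\<in>X. \<forall>y\<in>Y. \<forall>y'\<in>Y. tens x (y + y') = tens x y + tens x y')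
   \<and> (\<forall>x\<in>X. \<forall>r\<in>R0. \<forall>y\<in>Y. tens (mX x r) y = tens x (mY r y))
   \<and> (\<forall>t. \<exists>(n::nat) xs ys. (\<forall>i<n. xs i \<in> X \<and> ys i \<in> Y) \<and> t = (\<Sum>i<n. tens (xs i) (ys i)))
   \<and> (\<forall>\<phi> :: 'x \<Rightarrow> 'y \<Rightarrow> 'z.
        (\<forall>x\<in>X. \<forall>x'\<in>X. \<forall>y\<in>Y. \<phi> (x + x') y = \<phi> x y + \<phi> x' y)
      \<and> (\<forall>x\<in>X. \<forall>y\<in>Y. \<forall>y'\<in>Y. \<phi> x (y + y') = \<phi> x y + \<phi> x y')
      \<and> (\<forall>x\<in>X. \<forall>r\<in>R0. \<forall>y\<in>Y. \<phi> (mX x r) y = \<phi> x (mY r y))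
      \<longrightarrow> (\<exists>\<psi> :: 't \<Rightarrow> 'z. (\<forall>s t. \<psi> (s + t) = \<psi> s + \<psi> t)
                           \<and> (\<forall>x\<in>X. \<forall>y\<in>Y. \<psi> (tens x y) = \<phi> x y)))"

text \<open>Hom_A(Omega^1, X): right A-linear maps from Omega^1 (carrier Om1 inside the total
  algebra, A with carrier A0) to the right A-module X; maps are normalised to 0 outside Om1.\<close>

definition homOm :: "'r::ring_1 set \<Rightarrow> 'r set \<Rightarrow> 'x::ab_group_add set \<Rightarrow> ('x \<Rightarrow> 'r \<Rightarrow> 'x)
    \<Rightarrow> ('r \<Rightarrow> 'x) set" where
  "homOm A0 Om1 X act =
     {f. (\<forall>\<omega>\<in>Om1. f \<omega> \<in> X)
       \<and> (\<forall>\<omega>\<in>Om1. \<forall>\<omega>'\<in>Om1. f (\<omega> + \<omega>') = f \<omega> + f \<omega>')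
       \<and> (\<forall>\<omega>\<in>Om1. \<forall>a\<in>A0. f (\<omega> * a) = act (f \<omega>) a)
       \<and> (\<forall>\<omega>. \<omega> \<notin> Om1 \<longrightarrow> f \<omega> = 0)}"

definition hom_ract :: "'r::ring_1 set \<Rightarrow> ('r \<Rightarrow> 'x::ab_group_add) \<Rightarrow> 'r \<Rightarrow> ('r \<Rightarrow> 'x)" where
  "hom_ract Om1 f a = (\<lambda>\<omega>. if \<omega> \<in> Om1 then f (a * \<omega>) else 0)"

definition hom_connection :: "('k::field \<Rightarrow> 'r::ring_1) \<Rightarrow> (nat \<Rightarrow> 'r set) \<Rightarrow> ('r \<Rightarrow> 'r)
    \<Rightarrow> 'x::ab_group_add set \<Rightarrow> ('x \<Rightarrow> 'r \<Rightarrow> 'x) \<Rightarrow> (('r \<Rightarrow> 'x) \<Rightarrow> 'x) \<Rightarrow> bool" where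
  "hom_connection \<iota> G d X act nab \<longleftrightarrow>
     (\<forall>f\<in>homOm (G 0) (G 1) X act. nab f \<in> X)
   \<and> (\<forall>f\<in>homOm (G 0) (G 1) X act. \<forall>g\<in>homOm (G 0) (G 1) X act.
        nab (\<lambda>\<omega>. f \<omega> + g \<omega>) = nab f + nab g)
   \<and> (\<forall>f\<in>homOm (G 0) (G 1) X act. \<forall>c.
        nab (hom_ract (G 1) f (\<iota> c)) = act (nab f) (\<iota> c))
   \<and> (\<forall>f\<in>homOm (G 0) (G 1) X act. \<forall>a\<in>G 0.
        nab (hom_ract (G 1) f a) = act (nab f) a + f (d a))"

definition homAEM :: "'a::ring_1 set \<Rightarrow> ('e::ab_group_add \<Rightarrow> 'a \<Rightarrow> 'e) \<Rightarrow> ('m::ab_group_add \<Rightarrow> 'a \<Rightarrow> 'm)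
    \<Rightarrow> ('e \<Rightarrow> 'm) set" where
  "homAEM A0 rE actM =
     {g. (\<forall>e e'. g (e + e') = g e + g e') \<and> (\<forall>e. \<forall>a\<in>A0. g (rE e a) = actM (g e) a)}"

definition homEM_ract :: "('b \<Rightarrow> 'e \<Rightarrow> 'e) \<Rightarrow> ('e \<Rightarrow> 'm) \<Rightarrow> 'b \<Rightarrow> ('e \<Rightarrow> 'm)" where
  "homEM_ract lE g b = (\<lambda>e. g (lE b e))"

text \<open>The identification Hom_B(Omega^1 B, Hom_A(E,M)) \<cong> Hom_A(Omega^1 B \<otimes>_B E, M):
  F corresponds to the additive map f with f(\<omega> \<otimes> e) = F \<omega> e.\<close>

definition induced_map :: "'b set \<Rightarrow> ('b \<Rightarrow> 'e \<Rightarrow> 't::ab_group_add) \<Rightarrow> ('b \<Rightarrow> 'e \<Rightarrow> 'm::ab_group_add)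
    \<Rightarrow> ('t \<Rightarrow> 'm)" where
  "induced_map Om1 tens F =
     (THE f. (\<forall>s t. f (s + t) = f s + f t) \<and> (\<forall>\<omega>\<in>Om1. \<forall>e. f (tens \<omega> e) = F \<omega> e))"

definition hom_conn_E :: "'oa set \<Rightarrow> 'ob set \<Rightarrow> ('ob \<Rightarrow> 'e \<Rightarrow> 't::ab_group_add)
    \<Rightarrow> ('e \<Rightarrow> 'oa \<Rightarrow> 'u) \<Rightarrow> ('u \<Rightarrow> 't) \<Rightarrow> ('e \<Rightarrow> 't) \<Rightarrow> (('oa \<Rightarrow> 'm::ab_group_add) \<Rightarrow> 'm)
    \<Rightarrow> ('ob \<Rightarrow> 'e \<Rightarrow> 'm) \<Rightarrow> ('e \<Rightarrow> 'm)" where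
  "hom_conn_E OmA1 OmB1 tB tA \<sigma> conn0 nab F =
     (\<lambda>e. nab (\<lambda>\<omega>. if \<omega> \<in> OmA1 then induced_map OmB1 tB F (\<sigma> (tA e \<omega>)) else 0)
          - induced_map OmB1 tB F (conn0 e))"

end

theory Submission
  imports Defs HOL.Modules
begin

(* Identify F with the additive map f on \<Omega>\<^sup>1 B \<otimes>\<^sub>B E determined by f (\<omega> \<otimes> e) = F \<omega> e;
   all identities are then checked on pure tensors. The map f is right A-linear, and
   f \<circ> \<sigma>\<^sub>e lies in Hom_A(\<Omega>\<^sup>1 A, M) because \<sigma> is a bimodule map.

   Right A-linearity of \<nabla>\<^sup>E\<^sub>0 F: since \<sigma>\<^sub>e\<^sub>a = (\<sigma>\<^sub>e) a, the hom-connection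
   rule gives \<nabla>\<^sub>0 (f \<circ> \<sigma>\<^sub>e\<^sub>a) = \<nabla>\<^sub>0 (f \<circ> \<sigma>\<^sub>e) a + f (\<sigma> (e \<otimes> da)), while the twisted
   Leibniz rule gives f (\<nabla>\<^sup>0 (e a)) = f (\<nabla>\<^sup>0 e) a + f (\<sigma> (e \<otimes> da)); the two correction
   terms cancel.

   Leibniz rule of \<nabla>\<^sup>E\<^sub>0: F b corresponds to f (b \<cdot> -), and f (b \<cdot> \<sigma>\<^sub>e -) = f \<circ> \<sigma>\<^sub>b\<^sub>e
   by left B-linearity of \<sigma>, so only the term db \<otimes> e of \<nabla>\<^sup>0 (b e) = db \<otimes> e + b \<nabla>\<^sup>0 e
   survives, contributing F (db) e. *)

lemma additive_comp: "additive f \<Longrightarrow> additive g \<Longrightarrow> additive (\<lambda>x. f (g x))"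
  unfolding additive_def by simp

lemma right_module_additive:
  "right_module R0 UNIV act \<Longrightarrow> r \<in> R0 \<Longrightarrow> additive (\<lambda>x. act x r)"
  unfolding right_module_def additive_def by blast

lemma left_module_additive:
  "left_module R0 UNIV act \<Longrightarrow> r \<in> R0 \<Longrightarrow> additive (act r)"
  unfolding left_module_def additive_def by blast

lemma dga_add_closed:
  assumes "dga \<iota> G d" and "x \<in> G n" and "y \<in> G n" shows "x + y \<in> G n"
proof -
  have "\<forall>n. 0 \<in> G n \<and> (\<forall>x\<in>G n. \<forall>y\<in>G n. x + y \<in> G n) \<and> (\<forall>x\<in>G n. - x \<in> G n)"
    using assms(1) unfolding dga_def by (elim conjE)
  with assms(2,3) show ?thesis by blast
qed

lemma dga_mult_closed:
  assumes "dga \<iota> G d" and "x \<in> G m" and "y \<in> G n" shows "x * y \<in> G (m + n)"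
proof -
  have "\<forall>m n. \<forall>x\<in>G m. \<forall>y\<in>G n. x * y \<in> G (m + n)"
    using assms(1) unfolding dga_def by (elim conjE)
  with assms(2,3) show ?thesis by blast
qed

lemma dga_one_closed:
  assumes "dga \<iota> G d" shows "1 \<in> G 0"
  using assms unfolding dga_def by (elim conjE)

lemma dga_scalar_closed:
  assumes "dga \<iota> G d" shows "\<iota> c \<in> G 0"
proof -
  have "\<forall>c. \<iota> c \<in> G 0 \<and> (\<forall>x. \<iota> c * x = x * \<iota> c)"
    using assms unfolding dga_def by (elim conjE)
  then show ?thesis by blast
qed

lemma dga_d_closed:
  assumes "dga \<iota> G d" and "x \<in> G n" shows "d x \<in> G (Suc n)"
proof -
  have "\<forall>n. \<forall>x\<in>G n. d x \<in> G (Suc n)"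
    using assms(1) unfolding dga_def by (elim conjE)
  with assms(2) show ?thesis by blast
qed

lemma dga_leibniz:
  assumes "dga \<iota> G d" and "x \<in> G n" shows "d (x * y) = d x * y + (-1) ^ n * x * d y"
proof -
  have "\<forall>n. \<forall>x\<in>G n. \<forall>y. d (x * y) = d x * y + (-1) ^ n * x * d y"
    using assms(1) unfolding dga_def by (elim conjE)
  with assms(2) show ?thesis by blast
qed

lemma dga_d_scalar_mult:
  assumes "dga \<iota> G d" shows "d (\<iota> c * x) = \<iota> c * d x"
proof -
  have "\<forall>c x. d (\<iota> c * x) = \<iota> c * d x"
    using assms unfolding dga_def by (elim conjE)
  then show ?thesis by blast
qed

lemma dga_d_one:
  assumes "dga \<iota> G d" shows "d 1 = 0"
  using dga_leibniz[OF assms dga_one_closed[OF assms], of 1] by simp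

lemma dga_d_scalar:
  assumes "dga \<iota> G d" shows "d (\<iota> c) = 0"
  using dga_d_scalar_mult[OF assms, of c 1] by (simp add: dga_d_one[OF assms])

lemma is_tensor_add_left:
  "is_tensor R0 mX X mY Y tens TYPE('z::ab_group_add) \<Longrightarrow> x \<in> X \<Longrightarrow> x' \<in> X \<Longrightarrow> y \<in> Y \<Longrightarrow>
    tens (x + x') y = tens x y + tens x' y"
  unfolding is_tensor_def by blast

lemma is_tensor_add_right:
  "is_tensor R0 mX X mY Y tens TYPE('z::ab_group_add) \<Longrightarrow> x \<in> X \<Longrightarrow> y \<in> Y \<Longrightarrow> y' \<in> Y \<Longrightarrow>
    tens x (y + y') = tens x y + tens x y'"
  unfolding is_tensor_def by blast

lemma is_tensor_balanced:
  "is_tensor R0 mX X mY Y tens TYPE('z::ab_group_add) \<Longrightarrow> x \<in> X \<Longrightarrow> r \<in> R0 \<Longrightarrow> y \<in> Y \<Longrightarrow>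
    tens (mX x r) y = tens x (mY r y)"
  unfolding is_tensor_def by blast

lemma tensor_additive_ext:
  fixes f g :: "'t::ab_group_add \<Rightarrow> 'z::ab_group_add"
  assumes T: "is_tensor R0 mX X mY Y tens TYPE('w::ab_group_add)"
    and "additive f" "additive g"
    and agree: "\<And>x y. x \<in> X \<Longrightarrow> y \<in> Y \<Longrightarrow> f (tens x y) = g (tens x y)"
  shows "f = g"
proof
  interpret f: additive f by fact
  interpret g: additive g by fact
  fix t
  obtain n :: nat and xs ys where gen: "\<forall>i<n. xs i \<in> X \<and> ys i \<in> Y"
    and t: "t = (\<Sum>i<n. tens (xs i) (ys i))"
    using T unfolding is_tensor_def by meson
  have "f t = (\<Sum>i<n. f (tens (xs i) (ys i)))" by (simp add: t f.sum)
  also have "\<dots> = (\<Sum>i<n. g (tens (xs i) (ys i)))" using gen agree by simp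
  also have "\<dots> = g t" by (simp add: t g.sum)
  finally show "f t = g t" .
qed

lemma induced_map_eqI:
  fixes f :: "'t::ab_group_add \<Rightarrow> 'z::ab_group_add"
  assumes T: "is_tensor R0 mX X mY UNIV tens TYPE('w::ab_group_add)"
    and f: "additive f"
    and f_tens: "\<And>x y. x \<in> X \<Longrightarrow> f (tens x y) = \<phi> x y"
  shows "induced_map X tens \<phi> = f"
  unfolding induced_map_def
proof (rule the_equality)
  show "(\<forall>s t. f (s + t) = f s + f t) \<and> (\<forall>x\<in>X. \<forall>y. f (tens x y) = \<phi> x y)"
    using f f_tens by (simp add: additive_def)
next
  fix g :: "'t \<Rightarrow> 'z"
  assume "(\<forall>s t. g (s + t) = g s + g t) \<and> (\<forall>x\<in>X. \<forall>y. g (tens x y) = \<phi> x y)"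
  then show "g = f"
    using tensor_additive_ext[OF T _ f] f_tens by (simp add: additive_def)
qed

lemma induced_map_balanced:
  fixes \<phi> :: "'x::ab_group_add \<Rightarrow> 'y::ab_group_add \<Rightarrow> 'z::ab_group_add"
    and tens :: "'x \<Rightarrow> 'y \<Rightarrow> 't::ab_group_add"
  assumes T: "is_tensor R0 mX X mY UNIV tens TYPE('z)"
    and "\<And>x x' y. x \<in> X \<Longrightarrow> x' \<in> X \<Longrightarrow> \<phi> (x + x') y = \<phi> x y + \<phi> x' y"
    and "\<And>x y y'. x \<in> X \<Longrightarrow> \<phi> x (y + y') = \<phi> x y + \<phi> x y'"
    and "\<And>x r y. x \<in> X \<Longrightarrow> r \<in> R0 \<Longrightarrow> \<phi> (mX x r) y = \<phi> x (mY r y)"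
  shows "additive (induced_map X tens \<phi>)"
    and "\<And>x y. x \<in> X \<Longrightarrow> induced_map X tens \<phi> (tens x y) = \<phi> x y"
proof -
  obtain \<psi> :: "'t \<Rightarrow> 'z" where \<psi>: "additive \<psi>" and \<psi>_tens: "\<forall>x\<in>X. \<forall>y. \<psi> (tens x y) = \<phi> x y"
    using T assms(2-4) unfolding is_tensor_def additive_def by (elim conjE allE[of _ \<phi>]) auto
  have "induced_map X tens \<phi> = \<psi>"
    using induced_map_eqI[OF T \<psi>] \<psi>_tens by blast
  then show "additive (induced_map X tens \<phi>)"
    and "\<And>x y. x \<in> X \<Longrightarrow> induced_map X tens \<phi> (tens x y) = \<phi> x y"
    using \<psi> \<psi>_tens by simp_all
qed

lemma homOm_zero:
  assumes "F \<in> homOm A0 Om1 X act" shows "F 0 = 0"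
proof (cases "0 \<in> Om1")
  case True
  then have "F (0 + 0) = F 0 + F 0" using assms unfolding homOm_def by blast
  then show ?thesis by simp
next
  case False
  then show ?thesis using assms unfolding homOm_def by blast
qed

lemma hom_connection_add:
  assumes "hom_connection \<iota> G d X act nab"
    and "f \<in> homOm (G 0) (G 1) X act" and "g \<in> homOm (G 0) (G 1) X act"
  shows "nab (\<lambda>\<omega>. f \<omega> + g \<omega>) = nab f + nab g"
  using assms unfolding hom_connection_def by blast

lemma hom_connection_leibniz:
  assumes "hom_connection \<iota> G d X act nab"
    and "f \<in> homOm (G 0) (G 1) X act" and "a \<in> G 0"
  shows "nab (hom_ract (G 1) f a) = act (nab f) a + f (d a)"
  using assms unfolding hom_connection_def by blast

lemma right_module_homAEM:
  assumes E: "bimodule B0 A0 \<iota>B \<iota>A UNIV lE rE" and M: "right_module A0 UNIV actM"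
  shows "right_module B0 (homAEM A0 rE actM) (homEM_ract lE)"
proof -
  have lE: "left_module B0 UNIV lE"
    and lE_rE: "\<And>b a x. b \<in> B0 \<Longrightarrow> a \<in> A0 \<Longrightarrow> rE (lE b x) a = lE b (rE x a)"
    using E unfolding bimodule_def by blast+
  have lE_add: "\<And>b x y. b \<in> B0 \<Longrightarrow> lE b (x + y) = lE b x + lE b y"
    and lE_plus: "\<And>r s x. r \<in> B0 \<Longrightarrow> s \<in> B0 \<Longrightarrow> lE (r + s) x = lE r x + lE s x"
    and lE_mult: "\<And>r s x. r \<in> B0 \<Longrightarrow> s \<in> B0 \<Longrightarrow> lE (r * s) x = lE r (lE s x)"
    and lE_one: "\<And>x. lE 1 x = x"
    using lE unfolding left_module_def by blast+
  have actM: "\<And>a. a \<in> A0 \<Longrightarrow> additive (\<lambda>m. actM m a)"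
    using right_module_additive[OF M] .
  show ?thesis
    unfolding right_module_def homAEM_def homEM_ract_def
  proof (intro conjI ballI; (elim CollectE conjE)?)
    show "0 \<in> {g. (\<forall>e e'. g (e + e') = g e + g e') \<and> (\<forall>e. \<forall>a\<in>A0. g (rE e a) = actM (g e) a)}"
      using additive.zero[OF actM] by simp
  qed (auto simp: additive.add[OF actM] additive.minus[OF actM] lE_add lE_plus lE_mult lE_one
        lE_rE[symmetric])
qed

definition comp_sigma :: "'oa set \<Rightarrow> ('e \<Rightarrow> 'oa \<Rightarrow> 'u) \<Rightarrow> ('u \<Rightarrow> 't) \<Rightarrow> ('t \<Rightarrow> 'm::zero)
    \<Rightarrow> 'e \<Rightarrow> 'oa \<Rightarrow> 'm" where
  "comp_sigma OmA1 tA \<sigma> f e = (\<lambda>\<omega>. if \<omega> \<in> OmA1 then f (\<sigma> (tA e \<omega>)) else 0)"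

lemma hom_conn_E_eq:
  "hom_conn_E OmA1 OmB1 tB tA \<sigma> conn0 nab F =
     (\<lambda>e. nab (comp_sigma OmA1 tA \<sigma> (induced_map OmB1 tB F) e) - induced_map OmB1 tB F (conn0 e))"
  unfolding hom_conn_E_def comp_sigma_def ..

locale hom_connection_transfer =
  fixes \<iota>A :: "'k::field \<Rightarrow> 'oa::ring_1" and GA :: "nat \<Rightarrow> 'oa set" and dA :: "'oa \<Rightarrow> 'oa"
    and \<iota>B :: "'k \<Rightarrow> 'ob::ring_1" and GB :: "nat \<Rightarrow> 'ob set" and dB :: "'ob \<Rightarrow> 'ob"
    and lE :: "'ob \<Rightarrow> 'e::ab_group_add \<Rightarrow> 'e" and rE :: "'e \<Rightarrow> 'oa \<Rightarrow> 'e"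
    and tB :: "'ob \<Rightarrow> 'e \<Rightarrow> 't::ab_group_add" and lT :: "'ob \<Rightarrow> 't \<Rightarrow> 't" and rT :: "'t \<Rightarrow> 'oa \<Rightarrow> 't"
    and tA :: "'e \<Rightarrow> 'oa \<Rightarrow> 'u::ab_group_add" and lU :: "'ob \<Rightarrow> 'u \<Rightarrow> 'u"
    and rU :: "'u \<Rightarrow> 'oa \<Rightarrow> 'u"
    and conn0 :: "'e \<Rightarrow> 't" and \<sigma> :: "'u \<Rightarrow> 't"
    and actM :: "'m::ab_group_add \<Rightarrow> 'oa \<Rightarrow> 'm" and nab :: "('oa \<Rightarrow> 'm) \<Rightarrow> 'm"
  assumes dgaA: "dga \<iota>A GA dA"
    and dgaB: "dga \<iota>B GB dB"
    and T_tensor: "is_tensor (GB 0) (\<lambda>\<omega> b. \<omega> * b) (GB 1) lE UNIV tB TYPE('m)"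
    and T_bimod: "bimodule (GB 0) (GA 0) \<iota>B \<iota>A UNIV lT rT"
    and T_left: "\<forall>b\<in>GB 0. \<forall>\<omega>\<in>GB 1. \<forall>e. tB (b * \<omega>) e = lT b (tB \<omega> e)"
    and T_right: "\<forall>a\<in>GA 0. \<forall>\<omega>\<in>GB 1. \<forall>e. tB \<omega> (rE e a) = rT (tB \<omega> e) a"
    and U_tensor: "is_tensor (GA 0) rE UNIV (\<lambda>a \<omega>. a * \<omega>) (GA 1) tA TYPE('t)"
    and U_left: "\<forall>b\<in>GB 0. \<forall>e. \<forall>\<omega>\<in>GA 1. tA (lE b e) \<omega> = lU b (tA e \<omega>)"
    and U_right: "\<forall>a\<in>GA 0. \<forall>e. \<forall>\<omega>\<in>GA 1. tA e (\<omega> * a) = rU (tA e \<omega>) a"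
    and conn0_add: "\<forall>e e'. conn0 (e + e') = conn0 e + conn0 e'"
    and conn0_left: "\<forall>b\<in>GB 0. \<forall>e. conn0 (lE b e) = tB (dB b) e + lT b (conn0 e)"
    and \<sigma>_add: "\<forall>u v. \<sigma> (u + v) = \<sigma> u + \<sigma> v"
    and \<sigma>_left: "\<forall>b\<in>GB 0. \<forall>u. \<sigma> (lU b u) = lT b (\<sigma> u)"
    and \<sigma>_right: "\<forall>a\<in>GA 0. \<forall>u. \<sigma> (rU u a) = rT (\<sigma> u) a"
    and conn0_right: "\<forall>e. \<forall>a\<in>GA 0. conn0 (rE e a) = rT (conn0 e) a + \<sigma> (tA e (dA a))"
    and M_mod: "right_module (GA 0) UNIV actM"
    and M_hc: "hom_connection \<iota>A GA dA UNIV actM nab"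
begin

abbreviation "HomEM \<equiv> homAEM (GA 0) rE actM"
abbreviation "HomB \<equiv> homOm (GB 0) (GB 1) HomEM (homEM_ract lE)"
abbreviation "ind F \<equiv> induced_map (GB 1) tB F"
abbreviation "comp_\<sigma> \<equiv> comp_sigma (GA 1) tA \<sigma>"
abbreviation "nabE \<equiv> hom_conn_E (GA 1) (GB 1) tB tA \<sigma> conn0 nab"

lemma actM_additive: "a \<in> GA 0 \<Longrightarrow> additive (\<lambda>m. actM m a)"
  using right_module_additive[OF M_mod] .

lemma ind_additive: "F \<in> HomB \<Longrightarrow> additive (ind F)"
  and ind_tensor: "F \<in> HomB \<Longrightarrow> \<omega> \<in> GB 1 \<Longrightarrow> ind F (tB \<omega> e) = F \<omega> e"
  by (rule induced_map_balanced[OF T_tensor]; auto simp: homOm_def homAEM_def homEM_ract_def)+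

lemma ind_right_linear:
  assumes F: "F \<in> HomB" and a: "a \<in> GA 0"
  shows "ind F (rT t a) = actM (ind F t) a"
proof -
  have rT: "additive (\<lambda>t. rT t a)"
    using T_bimod a unfolding bimodule_def right_module_def additive_def by blast
  have "(\<lambda>t. ind F (rT t a)) = (\<lambda>t. actM (ind F t) a)"
  proof (rule tensor_additive_ext[OF T_tensor])
    show "additive (\<lambda>t. ind F (rT t a))"
      using additive_comp[OF ind_additive[OF F] rT] .
    show "additive (\<lambda>t. actM (ind F t) a)"
      using additive_comp[OF actM_additive[OF a] ind_additive[OF F]] .
    fix \<omega> e assume \<omega>: "\<omega> \<in> GB 1"
    have "F \<omega> \<in> HomEM" using F \<omega> unfolding homOm_def by blast
    then have "F \<omega> (rE e a) = actM (F \<omega> e) a"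
      using a unfolding homAEM_def by blast
    then show "ind F (rT (tB \<omega> e) a) = actM (ind F (tB \<omega> e)) a"
      using T_right a \<omega> ind_tensor[OF F \<omega>] by metis
  qed
  then show ?thesis by metis
qed

lemma ind_hom_ract:
  assumes F: "F \<in> HomB" and b: "b \<in> GB 0"
  shows "ind (hom_ract (GB 1) F b) = (\<lambda>t. ind F (lT b t))"
proof (rule induced_map_eqI[OF T_tensor])
  have "additive (lT b)"
    using T_bimod b left_module_additive unfolding bimodule_def by blast
  then show "additive (\<lambda>t. ind F (lT b t))"
    using additive_comp[OF ind_additive[OF F]] by blast
  fix \<omega> e assume \<omega>: "\<omega> \<in> GB 1"
  have b\<omega>: "b * \<omega> \<in> GB 1"
    using dga_mult_closed[OF dgaB b \<omega>] by simp
  have "ind F (lT b (tB \<omega> e)) = ind F (tB (b * \<omega>) e)"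
    using T_left b \<omega> by simp
  also have "\<dots> = F (b * \<omega>) e"
    using ind_tensor[OF F b\<omega>] .
  finally show "ind F (lT b (tB \<omega> e)) = hom_ract (GB 1) F b \<omega> e"
    using \<omega> unfolding hom_ract_def by simp
qed

lemma ind_add:
  assumes F: "F \<in> HomB" and G: "G \<in> HomB"
  shows "ind (\<lambda>\<omega>. F \<omega> + G \<omega>) = (\<lambda>t. ind F t + ind G t)"
proof (rule induced_map_eqI[OF T_tensor])
  show "additive (\<lambda>t. ind F t + ind G t)"
    using ind_additive[OF F] ind_additive[OF G] unfolding additive_def by (simp add: algebra_simps)
  fix \<omega> e assume "\<omega> \<in> GB 1"
  then show "ind F (tB \<omega> e) + ind G (tB \<omega> e) = (F \<omega> + G \<omega>) e"
    using ind_tensor[OF F] ind_tensor[OF G] by simp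
qed

lemma comp_sigma_homOm:
  assumes f: "additive f" and f_right: "\<And>a t. a \<in> GA 0 \<Longrightarrow> f (rT t a) = actM (f t) a"
  shows "comp_\<sigma> f e \<in> homOm (GA 0) (GA 1) UNIV actM"
  unfolding homOm_def
proof (intro CollectI conjI ballI allI impI)
  fix \<omega> \<omega>' assume "\<omega> \<in> GA 1" and "\<omega>' \<in> GA 1"
  moreover have "tA e (\<omega> + \<omega>') = tA e \<omega> + tA e \<omega>'"
    using is_tensor_add_right[OF U_tensor] calculation by blast
  ultimately show "comp_\<sigma> f e (\<omega> + \<omega>') = comp_\<sigma> f e \<omega> + comp_\<sigma> f e \<omega>'"
    using dga_add_closed[OF dgaA] \<sigma>_add additive.add[OF f] unfolding comp_sigma_def by simp
next
  fix \<omega> a assume \<omega>: "\<omega> \<in> GA 1" and a: "a \<in> GA 0"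
  have "\<omega> * a \<in> GA 1"
    using dga_mult_closed[OF dgaA \<omega> a] by simp
  then show "comp_\<sigma> f e (\<omega> * a) = actM (comp_\<sigma> f e \<omega>) a"
    using \<omega> a U_right \<sigma>_right f_right unfolding comp_sigma_def by simp
qed (simp_all add: comp_sigma_def)

lemma comp_sigma_add:
  "additive f \<Longrightarrow> comp_\<sigma> f (e + e') = (\<lambda>\<omega>. comp_\<sigma> f e \<omega> + comp_\<sigma> f e' \<omega>)"
  using is_tensor_add_left[OF U_tensor] \<sigma>_add unfolding comp_sigma_def additive_def by auto

lemma comp_sigma_right_action:
  assumes a: "a \<in> GA 0"
  shows "comp_\<sigma> f (rE e a) = hom_ract (GA 1) (comp_\<sigma> f e) a"
proof
  fix \<omega>
  show "comp_\<sigma> f (rE e a) \<omega> = hom_ract (GA 1) (comp_\<sigma> f e) a \<omega>"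
  proof (cases "\<omega> \<in> GA 1")
    case True
    moreover have "a * \<omega> \<in> GA 1"
      using dga_mult_closed[OF dgaA a True] by simp
    moreover have "tA (rE e a) \<omega> = tA e (a * \<omega>)"
      using is_tensor_balanced[OF U_tensor] a True by blast
    ultimately show ?thesis unfolding comp_sigma_def hom_ract_def by simp
  qed (simp add: comp_sigma_def hom_ract_def)
qed

lemma comp_sigma_left_action:
  "b \<in> GB 0 \<Longrightarrow> comp_\<sigma> (\<lambda>t. f (lT b t)) e = comp_\<sigma> f (lE b e)"
  using U_left \<sigma>_left unfolding comp_sigma_def by auto

lemma comp_sigma_ind_homOm: "F \<in> HomB \<Longrightarrow> comp_\<sigma> (ind F) e \<in> homOm (GA 0) (GA 1) UNIV actM"
  using comp_sigma_homOm[OF ind_additive ind_right_linear] by blast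

lemma hom_conn_E_homAEM:
  assumes F: "F \<in> HomB" shows "nabE F \<in> HomEM"
proof -
  interpret f: additive "ind F" using ind_additive[OF F] .
  show ?thesis
    unfolding hom_conn_E_eq homAEM_def
  proof (intro CollectI conjI allI ballI)
    fix e e'
    show "nab (comp_\<sigma> (ind F) (e + e')) - ind F (conn0 (e + e')) =
        (nab (comp_\<sigma> (ind F) e) - ind F (conn0 e)) + (nab (comp_\<sigma> (ind F) e') - ind F (conn0 e'))"
      using comp_sigma_add[OF ind_additive[OF F]] conn0_add f.add
        hom_connection_add[OF M_hc comp_sigma_ind_homOm[OF F] comp_sigma_ind_homOm[OF F]]
      by (simp add: algebra_simps)
  next
    fix e a assume a: "a \<in> GA 0"
    have "dA a \<in> GA 1"
      using dga_d_closed[OF dgaA a] by simp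
    have "nab (comp_\<sigma> (ind F) (rE e a)) = nab (hom_ract (GA 1) (comp_\<sigma> (ind F) e) a)"
      unfolding comp_sigma_right_action[OF a] ..
    also have "\<dots> = actM (nab (comp_\<sigma> (ind F) e)) a + comp_\<sigma> (ind F) e (dA a)"
      by (rule hom_connection_leibniz[OF M_hc comp_sigma_ind_homOm[OF F] a])
    also have "comp_\<sigma> (ind F) e (dA a) = ind F (\<sigma> (tA e (dA a)))"
      unfolding comp_sigma_def using \<open>dA a \<in> GA 1\<close> by (rule if_P)
    finally have nab_part:
      "nab (comp_\<sigma> (ind F) (rE e a)) = actM (nab (comp_\<sigma> (ind F) e)) a + ind F (\<sigma> (tA e (dA a)))" .
    have conn0_part: "ind F (conn0 (rE e a)) = actM (ind F (conn0 e)) a + ind F (\<sigma> (tA e (dA a)))"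
      using conn0_right a f.add ind_right_linear[OF F a] by simp
    show "nab (comp_\<sigma> (ind F) (rE e a)) - ind F (conn0 (rE e a)) =
        actM (nab (comp_\<sigma> (ind F) e) - ind F (conn0 e)) a"
      unfolding nab_part conn0_part additive.diff[OF actM_additive[OF a]] by simp
  qed
qed

lemma hom_conn_E_leibniz:
  assumes F: "F \<in> HomB" and b: "b \<in> GB 0"
  shows "nabE (hom_ract (GB 1) F b) = homEM_ract lE (nabE F) b + F (dB b)"
proof
  fix e
  have "dB b \<in> GB 1"
    using dga_d_closed[OF dgaB b] by simp
  then have "ind F (conn0 (lE b e)) = F (dB b) e + ind F (lT b (conn0 e))"
    using conn0_left b additive.add[OF ind_additive[OF F]] ind_tensor[OF F] by simp
  then show "nabE (hom_ract (GB 1) F b) e = (homEM_ract lE (nabE F) b + F (dB b)) e"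
    unfolding hom_conn_E_eq homEM_ract_def ind_hom_ract[OF F b] comp_sigma_left_action[OF b]
    by simp
qed

lemma hom_conn_E_add:
  assumes F: "F \<in> HomB" and G: "G \<in> HomB"
  shows "nabE (\<lambda>\<omega>. F \<omega> + G \<omega>) = nabE F + nabE G"
proof
  fix e
  have "comp_\<sigma> (\<lambda>t. ind F t + ind G t) e = (\<lambda>\<omega>. comp_\<sigma> (ind F) e \<omega> + comp_\<sigma> (ind G) e \<omega>)"
    unfolding comp_sigma_def by auto
  then show "nabE (\<lambda>\<omega>. F \<omega> + G \<omega>) e = (nabE F + nabE G) e"
    using hom_connection_add[OF M_hc comp_sigma_ind_homOm[OF F] comp_sigma_ind_homOm[OF G]]
    unfolding hom_conn_E_eq ind_add[OF F G] by simp
qed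

lemma hom_connection_hom_conn_E: "hom_connection \<iota>B GB dB HomEM (homEM_ract lE) nabE"
  unfolding hom_connection_def
proof (intro conjI ballI allI)
  fix F assume "F \<in> HomB"
  then show "nabE F \<in> HomEM"
    by (rule hom_conn_E_homAEM)
next
  fix F G assume "F \<in> HomB" and "G \<in> HomB"
  then show "nabE (\<lambda>\<omega>. F \<omega> + G \<omega>) = nabE F + nabE G"
    by (rule hom_conn_E_add)
next
  fix F c assume F: "F \<in> HomB"
  show "nabE (hom_ract (GB 1) F (\<iota>B c)) = homEM_ract lE (nabE F) (\<iota>B c)"
    using hom_conn_E_leibniz[OF F dga_scalar_closed[OF dgaB]] dga_d_scalar[OF dgaB] homOm_zero[OF F]
    by simp
next
  fix F b assume "F \<in> HomB" and "b \<in> GB 0"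
  then show "nabE (hom_ract (GB 1) F b) = homEM_ract lE (nabE F) b + F (dB b)"
    by (rule hom_conn_E_leibniz)
qed

end

theorem mainTheorem2:
  fixes \<iota>A :: "'k::field \<Rightarrow> 'oa::ring_1" and GA :: "nat \<Rightarrow> 'oa set" and dA :: "'oa \<Rightarrow> 'oa"
    and \<iota>B :: "'k \<Rightarrow> 'ob::ring_1" and GB :: "nat \<Rightarrow> 'ob set" and dB :: "'ob \<Rightarrow> 'ob"
    and lE :: "'ob \<Rightarrow> 'e::ab_group_add \<Rightarrow> 'e" and rE :: "'e \<Rightarrow> 'oa \<Rightarrow> 'e"
    and tB :: "'ob \<Rightarrow> 'e \<Rightarrow> 't::ab_group_add" and lT :: "'ob \<Rightarrow> 't \<Rightarrow> 't" and rT :: "'t \<Rightarrow> 'oa \<Rightarrow> 't"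
    and tA :: "'e \<Rightarrow> 'oa \<Rightarrow> 'u::ab_group_add" and lU :: "'ob \<Rightarrow> 'u \<Rightarrow> 'u" and rU :: "'u \<Rightarrow> 'oa \<Rightarrow> 'u"
    and conn0 :: "'e \<Rightarrow> 't" and \<sigma> :: "'u \<Rightarrow> 't"
    and actM :: "'m::ab_group_add \<Rightarrow> 'oa \<Rightarrow> 'm" and nab :: "('oa \<Rightarrow> 'm) \<Rightarrow> 'm"
  assumes dgaA: "dga \<iota>A GA dA"
    and dgaB: "dga \<iota>B GB dB"
    \<comment> \<open>E is a (B,A)-bimodule\<close>
    and E_bimod: "bimodule (GB 0) (GA 0) \<iota>B \<iota>A UNIV lE rE"
    \<comment> \<open>T = Omega^1 B \<otimes>_B E, a (B,A)-bimodule via b(\<omega>\<otimes>e) = (b\<omega>)\<otimes>e, (\<omega>\<otimes>e)a = \<omega>\<otimes>(ea)\<close>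
    and T_tensor: "is_tensor (GB 0) (\<lambda>\<omega> b. \<omega> * b) (GB 1) lE UNIV tB TYPE('m)"
    and T_bimod: "bimodule (GB 0) (GA 0) \<iota>B \<iota>A UNIV lT rT"
    and T_left: "\<forall>b\<in>GB 0. \<forall>\<omega>\<in>GB 1. \<forall>e. tB (b * \<omega>) e = lT b (tB \<omega> e)"
    and T_right: "\<forall>a\<in>GA 0. \<forall>\<omega>\<in>GB 1. \<forall>e. tB \<omega> (rE e a) = rT (tB \<omega> e) a"
    \<comment> \<open>U = E \<otimes>_A Omega^1 A, a (B,A)-bimodule\<close>
    and U_tensor: "is_tensor (GA 0) rE UNIV (\<lambda>a \<omega>. a * \<omega>) (GA 1) tA TYPE('t)"
    and U_bimod: "bimodule (GB 0) (GA 0) \<iota>B \<iota>A UNIV lU rU"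
    and U_left: "\<forall>b\<in>GB 0. \<forall>e. \<forall>\<omega>\<in>GA 1. tA (lE b e) \<omega> = lU b (tA e \<omega>)"
    and U_right: "\<forall>a\<in>GA 0. \<forall>e. \<forall>\<omega>\<in>GA 1. tA e (\<omega> * a) = rU (tA e \<omega>) a"
    \<comment> \<open>nabla^0 : E \<rightarrow> Omega^1 B \<otimes>_B E is k-linear with the left Leibniz rule\<close>
    and conn0_add: "\<forall>e e'. conn0 (e + e') = conn0 e + conn0 e'"
    and conn0_k: "\<forall>c e. conn0 (lE (\<iota>B c) e) = lT (\<iota>B c) (conn0 e)"
    and conn0_left: "\<forall>b\<in>GB 0. \<forall>e. conn0 (lE b e) = tB (dB b) e + lT b (conn0 e)"
    \<comment> \<open>\<sigma> : E \<otimes>_A Omega^1 A \<rightarrow> Omega^1 B \<otimes>_B E is a (B,A)-bimodule map\<close>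
    and \<sigma>_add: "\<forall>u v. \<sigma> (u + v) = \<sigma> u + \<sigma> v"
    and \<sigma>_left: "\<forall>b\<in>GB 0. \<forall>u. \<sigma> (lU b u) = lT b (\<sigma> u)"
    and \<sigma>_right: "\<forall>a\<in>GA 0. \<forall>u. \<sigma> (rU u a) = rT (\<sigma> u) a"
    \<comment> \<open>right twisted Leibniz rule\<close>
    and conn0_right: "\<forall>e. \<forall>a\<in>GA 0. conn0 (rE e a) = rT (conn0 e) a + \<sigma> (tA e (dA a))"
    \<comment> \<open>M is a right A-module with a hom-connection nab\<close>
    and M_mod: "right_module (GA 0) UNIV actM"
    and M_hc: "hom_connection \<iota>A GA dA UNIV actM nab"
  shows "(\<forall>F\<in>homOm (GB 0) (GB 1) (homAEM (GA 0) rE actM) (homEM_ract lE).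
            hom_conn_E (GA 1) (GB 1) tB tA \<sigma> conn0 nab F \<in> homAEM (GA 0) rE actM)
       \<and> right_module (GB 0) (homAEM (GA 0) rE actM) (homEM_ract lE)
       \<and> hom_connection \<iota>B GB dB (homAEM (GA 0) rE actM) (homEM_ract lE)
            (hom_conn_E (GA 1) (GB 1) tB tA \<sigma> conn0 nab)"
proof -
  interpret hom_connection_transfer \<iota>A GA dA \<iota>B GB dB lE rE tB lT rT tA lU rU conn0 \<sigma> actM nab
    by (rule hom_connection_transfer.intro; fact)
  show ?thesis
    using hom_conn_E_homAEM right_module_homAEM[OF E_bimod M_mod] hom_connection_hom_conn_E
    by blast
qed

end
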